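(* Let $\mathcal{U}$ be a dead-ending universe and let $G$ be any finite partizan game. Then $G$ is Left $\mathcal{U}$-strong if and only if $o(G+X)\geq\mathscr{N}$ for all $X\in T_n(\mathcal{U})$, where $n$ is the formal birthday of $G$.
   Context: $o(G)$ is the misère outcome class, ordered $\mathscr{L} > \mathscr{N} > \mathscr{R}$, $\mathscr{L} > \mathscr{P} > \mathscr{R}$. A universe is a set of finite partizan games closed under options, disjunctive sums, conjugates, and forming $\{\mathscr{G}^L\mid\mathscr{G}^R\}$ from nonempty finite subsets of it. A Left end has no Left option; a Left dead-end is a game all of whose subpositions are Left ends (similarly Right). A universe is dead-ending if in every game of it, every subposition that is an end is a dead-end. $G$ is Left $\mathcal{U}$-strong if $o(G+X)\geq\mathscr{N}$ for every Left end $X\in\mathcal{U}$. The formal birthday of $G$ is the height of its game tree. The truncation is $\tau_0(G)=0$, $\tau_{n+1}(G)=\{\tau_n(G^L)\mid\tau_n(G^R)\}$. For Left dead-ends, $G\geq H$ means $o(G+X)\geq o(H+X)$ for all $X$ in every universe. Let $\mathcal{A}$ be the set of Left ends of $\mathcal{U}$ and $\operatorname{cl}(\mathcal{A})$ the smallest set containing $\mathcal{A}$ closed under options and sums; the test set $T_n(\mathcal{U})$ is the set of minimal elements (with respect to $\geq$) of $\{\tau_n(G):G\in\operatorname{cl}(\mathcal{A})\}$. *)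

theory Defs
  imports Main "HOL-Library.FSet"
begin

datatype game = Game (lefts: "game fset") (rights: "game fset")

definition zero_game :: game where
  "zero_game = Game {||} {||}"

text \<open>Disjunctive sum, defined by nested structural recursion.
  sum_aux FL FR H computes G + H where FL = (\<lambda>X. G^L + X) for the Left options
  and FR likewise for the Right options of G.\<close>
primrec sum_aux :: "(game \<Rightarrow> game) fset \<Rightarrow> (game \<Rightarrow> game) fset \<Rightarrow> game \<Rightarrow> game" where
  "sum_aux FL FR (Game HL HR) =
     Game ((\<lambda>f. f (Game HL HR)) |`| FL |\<union>| sum_aux FL FR |`| HL)
          ((\<lambda>f. f (Game HL HR)) |`| FR |\<union>| sum_aux FL FR |`| HR)"

primrec game_sum :: "game \<Rightarrow> game \<Rightarrow> game" where
  "game_sum (Game GL GR) = sum_aux (game_sum |`| GL) (game_sum |`| GR)"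

primrec conj :: "game \<Rightarrow> game" where
  "conj (Game GL GR) = Game (conj |`| GR) (conj |`| GL)"

text \<open>wins G = (Left wins moving first, Right wins moving first), misere play:
  a player who cannot move wins.\<close>
primrec wins :: "game \<Rightarrow> bool \<times> bool" where
  "wins (Game GL GR) =
     ((GL = {||} \<or> (\<exists>p \<in> fset (wins |`| GL). \<not> snd p)),
      (GR = {||} \<or> (\<exists>p \<in> fset (wins |`| GR). \<not> fst p)))"

datatype outcome = oL | oN | oP | oR

definition outcome :: "game \<Rightarrow> outcome" where
  "outcome G = (case wins G of
      (True, False) \<Rightarrow> oL | (True, True) \<Rightarrow> oN
    | (False, False) \<Rightarrow> oP | (False, True) \<Rightarrow> oR)"

definition outcome_le :: "outcome \<Rightarrow> outcome \<Rightarrow> bool" where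
  "outcome_le a b \<longleftrightarrow> a = b \<or> a = oR \<or> b = oL"

definition is_option :: "game \<Rightarrow> game \<Rightarrow> bool" where
  "is_option H G \<longleftrightarrow> H |\<in>| lefts G \<or> H |\<in>| rights G"

definition subposition :: "game \<Rightarrow> game \<Rightarrow> bool" where
  "subposition H G \<longleftrightarrow> is_option\<^sup>*\<^sup>* H G"

definition left_end :: "game \<Rightarrow> bool" where
  "left_end G \<longleftrightarrow> lefts G = {||}"

definition right_end :: "game \<Rightarrow> bool" where
  "right_end G \<longleftrightarrow> rights G = {||}"

definition left_dead_end :: "game \<Rightarrow> bool" where
  "left_dead_end G \<longleftrightarrow> (\<forall>H. subposition H G \<longrightarrow> left_end H)"

definition right_dead_end :: "game \<Rightarrow> bool" where
  "right_dead_end G \<longleftrightarrow> (\<forall>H. subposition H G \<longrightarrow> right_end H)"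

definition universe :: "game set \<Rightarrow> bool" where
  "universe U \<longleftrightarrow>
     (\<forall>G \<in> U. \<forall>H. is_option H G \<longrightarrow> H \<in> U) \<and>
     (\<forall>G \<in> U. \<forall>H \<in> U. game_sum G H \<in> U) \<and>
     (\<forall>G \<in> U. conj G \<in> U) \<and>
     (\<forall>A B. A \<noteq> {||} \<and> B \<noteq> {||} \<and> fset A \<subseteq> U \<and> fset B \<subseteq> U \<longrightarrow> Game A B \<in> U)"

definition dead_ending :: "game set \<Rightarrow> bool" where
  "dead_ending U \<longleftrightarrow>
     (\<forall>G \<in> U. \<forall>H. subposition H G \<longrightarrow>
        (left_end H \<longrightarrow> left_dead_end H) \<and> (right_end H \<longrightarrow> right_dead_end H))"

definition left_strong :: "game set \<Rightarrow> game \<Rightarrow> bool" where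
  "left_strong U G \<longleftrightarrow>
     (\<forall>X \<in> U. left_end X \<longrightarrow> outcome_le oN (outcome (game_sum G X)))"

primrec birthday :: "game \<Rightarrow> nat" where
  "birthday (Game GL GR) =
     Max (insert 0 (Suc ` (fset (birthday |`| GL) \<union> fset (birthday |`| GR))))"

fun trunc :: "nat \<Rightarrow> game \<Rightarrow> game" where
  "trunc 0 G = zero_game"
| "trunc (Suc n) G = Game (trunc n |`| lefts G) (trunc n |`| rights G)"

text \<open>G \<ge> H: o(G+X) \<ge> o(H+X) for all X (in every universe, i.e. for all games).\<close>
definition dead_ge :: "game \<Rightarrow> game \<Rightarrow> bool" where
  "dead_ge G H \<longleftrightarrow> (\<forall>X. outcome_le (outcome (game_sum H X)) (outcome (game_sum G X)))"

inductive_set cl :: "game set \<Rightarrow> game set" for A :: "game set" where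
  base: "G \<in> A \<Longrightarrow> G \<in> cl A"
| opt: "G \<in> cl A \<Longrightarrow> is_option H G \<Longrightarrow> H \<in> cl A"
| add: "G \<in> cl A \<Longrightarrow> H \<in> cl A \<Longrightarrow> game_sum G H \<in> cl A"

definition left_ends_of :: "game set \<Rightarrow> game set" where
  "left_ends_of U = {X \<in> U. left_end X}"

definition test_set :: "nat \<Rightarrow> game set \<Rightarrow> game set" where
  "test_set n U =
     (let S = trunc n ` cl (left_ends_of U)
      in {X \<in> S. \<forall>Y \<in> S. dead_ge X Y \<longrightarrow> dead_ge Y X})"

end

theory Submission
  imports Defs
begin

text \<open>Left is \<open>U\<close>-strong iff Left, moving first, wins \<open>G + X\<close> for every Left end \<open>X\<close> of \<open>U\<close>.
  In a dead-ending universe these \<open>X\<close> are Left dead ends, so Left can only move in \<open>G\<close>, and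
  between two Right moves in \<open>X\<close> Left must move in \<open>G\<close> or has already won. Hence only the top
  \<open>n = birthday G\<close> levels of \<open>X\<close> matter: the outcome is that of \<open>G + \<tau>\<^sub>n(X)\<close>.
  The truncations at depth \<open>n\<close> form a finite set, so each of them dominates a minimal one, that is
  an element of the test set, and domination transfers Left's win from the test game to \<open>\<tau>\<^sub>n(X)\<close>.\<close>

lemma game_option_induct:
  assumes "\<And>G. (\<And>G'. is_option G' G \<Longrightarrow> P G') \<Longrightarrow> P G"
  shows "P G"
proof (induction G)
  case (Game GL GR)
  then show ?case using assms[of "Game GL GR"] by (auto simp: is_option_def)
qed

lemma game_option_pair_induct:
  assumes "\<And>G H. (\<And>G'. is_option G' G \<Longrightarrow> P G' H) \<Longrightarrow> (\<And>H'. is_option H' H \<Longrightarrow> P G H') \<Longrightarrow> P G H"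
  shows "P G H"
proof (induction G arbitrary: H rule: game_option_induct)
  case outer: (1 G)
  show ?case
  proof (induction H rule: game_option_induct)
    case (1 H)
    then show ?case using assms outer.IH by blast
  qed
qed

lemma lefts_game_sum:
  "lefts (game_sum G H) = (\<lambda>G'. game_sum G' H) |`| lefts G |\<union>| game_sum G |`| lefts H"
  by (cases G; cases H) (simp add: fset.map_comp comp_def)

lemma rights_game_sum:
  "rights (game_sum G H) = (\<lambda>G'. game_sum G' H) |`| rights G |\<union>| game_sum G |`| rights H"
  by (cases G; cases H) (simp add: fset.map_comp comp_def)

lemma fst_wins_iff: "fst (wins G) \<longleftrightarrow> lefts G = {||} \<or> (\<exists>G'. G' |\<in>| lefts G \<and> \<not> snd (wins G'))"
  by (cases G) auto

lemma snd_wins_iff: "snd (wins G) \<longleftrightarrow> rights G = {||} \<or> (\<exists>G'. G' |\<in>| rights G \<and> \<not> fst (wins G'))"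
  by (cases G) auto

lemma wins_game_sum_commute: "wins (game_sum G H) = wins (game_sum H G)"
proof (induction G H rule: game_option_pair_induct)
  case (1 G H)
  have "fst (wins (game_sum G H)) = fst (wins (game_sum H G))"
    unfolding fst_wins_iff using 1 by (auto simp: lefts_game_sum is_option_def)
  moreover have "snd (wins (game_sum G H)) = snd (wins (game_sum H G))"
    unfolding snd_wins_iff using 1 by (auto simp: rights_game_sum is_option_def)
  ultimately show ?case by (simp add: prod_eq_iff)
qed

lemma N_le_outcome_iff: "outcome_le oN (outcome G) \<longleftrightarrow> fst (wins G)"
  by (auto simp: outcome_le_def outcome_def split: prod.splits bool.splits)

lemma outcome_le_trans: "outcome_le a b \<Longrightarrow> outcome_le b c \<Longrightarrow> outcome_le a c"
  by (cases a; cases b; cases c) (auto simp: outcome_le_def)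

lemma dead_ge_refl: "dead_ge G G"
  by (simp add: dead_ge_def outcome_le_def)

lemma dead_ge_trans: "dead_ge G H \<Longrightarrow> dead_ge H K \<Longrightarrow> dead_ge G K"
  unfolding dead_ge_def by (meson outcome_le_trans)

lemma dead_ge_fst_wins:
  assumes "dead_ge A B" and "fst (wins (game_sum G B))"
  shows "fst (wins (game_sum G A))"
proof -
  have "outcome_le (outcome (game_sum B G)) (outcome (game_sum A G))"
    using assms(1) by (simp add: dead_ge_def)
  moreover have "outcome_le oN (outcome (game_sum B G))"
    using assms(2) by (simp add: N_le_outcome_iff wins_game_sum_commute)
  ultimately show ?thesis
    using outcome_le_trans N_le_outcome_iff wins_game_sum_commute by metis
qed

lemma subposition_iff: "subposition H G \<longleftrightarrow> H = G \<or> (\<exists>G'. is_option G' G \<and> subposition H G')"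
  unfolding subposition_def by (auto elim: rtranclp.cases intro: rtranclp.rtrancl_into_rtrancl)

lemma left_dead_end_iff:
  "left_dead_end G \<longleftrightarrow> lefts G = {||} \<and> (\<forall>G'. G' |\<in>| rights G \<longrightarrow> left_dead_end G')"
  by (subst left_dead_end_def, subst subposition_iff)
     (auto simp: left_dead_end_def left_end_def is_option_def)

lemma left_dead_end_game_sum:
  "left_dead_end G \<Longrightarrow> left_dead_end H \<Longrightarrow> left_dead_end (game_sum G H)"
proof (induction G H rule: game_option_pair_induct)
  case (1 G H)
  then show ?case
    using left_dead_end_iff[of G] left_dead_end_iff[of H]
    by (subst left_dead_end_iff) (auto simp: lefts_game_sum rights_game_sum is_option_def)
qed

lemma cl_left_ends_of_subset:
  assumes "universe U" and "dead_ending U"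
  shows "cl (left_ends_of U) \<subseteq> {H \<in> U. left_dead_end H}"
proof
  have option_closed: "\<forall>G\<in>U. \<forall>H. is_option H G \<longrightarrow> H \<in> U"
    and sum_closed: "\<forall>G\<in>U. \<forall>H\<in>U. game_sum G H \<in> U"
    using assms(1) by (simp_all add: universe_def)
  fix H assume "H \<in> cl (left_ends_of U)"
  then show "H \<in> {H \<in> U. left_dead_end H}"
  proof (induction rule: cl.induct)
    case (base G)
    then have "G \<in> U" "left_end G" by (simp_all add: left_ends_of_def)
    moreover have "subposition G G" by (simp add: subposition_def)
    ultimately show ?case using assms(2) unfolding dead_ending_def by blast
  next
    case (opt G H)
    have "H \<in> U" using opt option_closed by blast
    moreover have "left_dead_end H" using opt left_dead_end_iff[of G] by (auto simp: is_option_def)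
    ultimately show ?case by simp
  next
    case (add G H)
    have "game_sum G H \<in> U" using add sum_closed by blast
    then show ?case using add left_dead_end_game_sum by simp
  qed
qed

lemma birthday_option_less: "is_option G' G \<Longrightarrow> birthday G' < birthday G"
proof (cases G)
  case (Game GL GR)
  assume "is_option G' G"
  then have "Suc (birthday G') \<in> insert 0 (Suc ` (fset (birthday |`| GL) \<union> fset (birthday |`| GR)))"
    using Game by (auto simp: is_option_def)
  then have "Suc (birthday G') \<le> birthday G" using Game by (simp del: insert_iff image_iff)
  then show ?thesis by simp
qed

lemma lefts_trunc_empty: "lefts G = {||} \<Longrightarrow> lefts (trunc n G) = {||}"
  by (cases n) (auto simp: zero_game_def)

lemma wins_game_sum_trunc:
  assumes "left_dead_end X"
  shows "(birthday G \<le> m \<longrightarrow> fst (wins (game_sum G (trunc m X))) = fst (wins (game_sum G X))) \<and>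
         (birthday G < m \<longrightarrow> snd (wins (game_sum G (trunc m X))) = snd (wins (game_sum G X)))"
  using assms
proof (induction G arbitrary: X m rule: game_option_induct)
  case (1 G)
  have left: "fst (wins (game_sum G (trunc m X))) = fst (wins (game_sum G X))"
    if "left_dead_end X" and "birthday G \<le> m" for X m
  proof -
    have "lefts X = {||}" using that(1) left_dead_end_iff by blast
    moreover have "snd (wins (game_sum G' (trunc m X))) = snd (wins (game_sum G' X))"
      if "G' |\<in>| lefts G" for G'
      using "1.IH"[of G' X m] birthday_option_less[of G' G] that \<open>left_dead_end X\<close> \<open>birthday G \<le> m\<close>
      by (simp add: is_option_def)
    ultimately show ?thesis
      unfolding fst_wins_iff by (auto simp: lefts_game_sum lefts_trunc_empty)
  qed
  have right: "snd (wins (game_sum G (trunc m X))) = snd (wins (game_sum G X))"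
    if "left_dead_end X" and "birthday G < m" for X m
  proof -
    obtain k where m: "m = Suc k" using \<open>birthday G < m\<close> by (cases m) auto
    have "fst (wins (game_sum G' (trunc m X))) = fst (wins (game_sum G' X))"
      if "G' |\<in>| rights G" for G'
      using "1.IH"[of G' X m] birthday_option_less[of G' G] that \<open>left_dead_end X\<close> \<open>birthday G < m\<close>
      by (simp add: is_option_def)
    moreover have "fst (wins (game_sum G (trunc k X'))) = fst (wins (game_sum G X'))"
      if "X' |\<in>| rights X" for X'
      using left[of X' k] left_dead_end_iff[of X] \<open>left_dead_end X\<close> that \<open>birthday G < m\<close> m
      by simp
    ultimately show ?thesis
      unfolding snd_wins_iff by (auto simp: rights_game_sum m)
  qed
  show ?case using left right "1.prems" by blast
qed

corollary fst_wins_game_sum_trunc_birthday: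
  "left_dead_end X \<Longrightarrow> fst (wins (game_sum G (trunc (birthday G) X))) = fst (wins (game_sum G X))"
  using wins_game_sum_trunc by blast

lemma finite_fsets_within: "finite T \<Longrightarrow> finite {A. fset A \<subseteq> T}"
  using finite_vimageI[of "Pow T" fset] by (simp add: inj_def fset_inject vimage_def)

lemma finite_range_trunc: "finite (range (trunc n))"
proof (induction n)
  case 0
  have "range (trunc 0) = {zero_game}" by auto
  then show ?case by simp
next
  case (Suc n)
  let ?F = "{A. fset A \<subseteq> range (trunc n)}"
  have "range (trunc (Suc n)) \<subseteq> case_prod Game ` (?F \<times> ?F)" by auto
  moreover have "finite ?F" using Suc by (rule finite_fsets_within)
  ultimately show ?case by (meson finite_SigmaI finite_imageI finite_subset)
qed

lemma finite_preorder_ex_minimal_below: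
  fixes ge :: "'a \<Rightarrow> 'a \<Rightarrow> bool"
  assumes "finite S" and "y \<in> S"
    and refl: "\<And>x. ge x x" and trans: "\<And>x y z. ge x y \<Longrightarrow> ge y z \<Longrightarrow> ge x z"
  shows "\<exists>x\<in>S. ge y x \<and> (\<forall>z\<in>S. ge x z \<longrightarrow> ge z x)"
proof -
  let ?gt = "\<lambda>x z. ge x z \<and> \<not> ge z x"
  have "asymp_on S ?gt" "transp_on S ?gt"
    using trans by (auto simp: asymp_on_def transp_on_def)
  then obtain x where "x \<in> S" "ge y x" "\<forall>z\<in>S. ?gt x z \<longrightarrow> \<not> ge y z"
    using Finite_Set.bex_max_element_with_property[of S ?gt "ge y"] assms(1,2) refl by blast
  then show ?thesis using trans by blast
qed

lemma test_set_subset: "test_set n U \<subseteq> trunc n ` cl (left_ends_of U)"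
  by (auto simp: test_set_def Let_def)

lemma test_set_ex_below:
  assumes "Y \<in> cl (left_ends_of U)"
  shows "\<exists>X \<in> test_set n U. dead_ge (trunc n Y) X"
proof -
  let ?S = "trunc n ` cl (left_ends_of U)"
  have "finite ?S" by (rule finite_subset[OF _ finite_range_trunc]) blast
  moreover have "trunc n Y \<in> ?S" using assms by blast
  ultimately have "\<exists>X\<in>?S. dead_ge (trunc n Y) X \<and> (\<forall>Z\<in>?S. dead_ge X Z \<longrightarrow> dead_ge Z X)"
    using dead_ge_refl dead_ge_trans by (rule finite_preorder_ex_minimal_below)
  then obtain X where "X \<in> ?S" "dead_ge (trunc n Y) X" "\<forall>Z\<in>?S. dead_ge X Z \<longrightarrow> dead_ge Z X"
    by blast
  moreover from this(1,3) have "X \<in> test_set n U" by (simp add: test_set_def Let_def)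
  ultimately show ?thesis by blast
qed

theorem mainTheorem4:
  fixes U :: "game set" and G :: game
  assumes "universe U" and "dead_ending U"
  shows "left_strong U G \<longleftrightarrow>
           (\<forall>X \<in> test_set (birthday G) U. outcome_le oN (outcome (game_sum G X)))"
  unfolding N_le_outcome_iff
proof
  assume strong: "left_strong U G"
  show "\<forall>X \<in> test_set (birthday G) U. fst (wins (game_sum G X))"
  proof
    fix X assume "X \<in> test_set (birthday G) U"
    then obtain H where "H \<in> cl (left_ends_of U)" and X: "X = trunc (birthday G) H"
      using test_set_subset by blast
    then have "H \<in> U" and dead: "left_dead_end H" using cl_left_ends_of_subset[OF assms] by auto
    moreover from dead have "left_end H" using left_dead_end_iff[of H] by (simp add: left_end_def)
    ultimately have "fst (wins (game_sum G H))"
      using strong by (simp add: left_strong_def N_le_outcome_iff)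
    then show "fst (wins (game_sum G X))" using X dead fst_wins_game_sum_trunc_birthday by simp
  qed
next
  assume tests: "\<forall>X \<in> test_set (birthday G) U. fst (wins (game_sum G X))"
  show "left_strong U G" unfolding left_strong_def N_le_outcome_iff
  proof (intro ballI impI)
    fix Y assume "Y \<in> U" "left_end Y"
    then have Y: "Y \<in> cl (left_ends_of U)" by (simp add: left_ends_of_def cl.base)
    then obtain X where "X \<in> test_set (birthday G) U" "dead_ge (trunc (birthday G) Y) X"
      using test_set_ex_below by blast
    with tests have "fst (wins (game_sum G (trunc (birthday G) Y)))" using dead_ge_fst_wins by blast
    moreover have "left_dead_end Y" using Y cl_left_ends_of_subset[OF assms] by blast
    ultimately show "fst (wins (game_sum G Y))" using fst_wins_game_sum_trunc_birthday by simp
  qed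
qed

end
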